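(* Let $V$ be a finite nonempty set and $f:\{0,1\}^V\to\{0,1\}^V$ be non-expansive. (1) If for every $1\le k\le |V|$ there are at most $2^k-1$ points $x\in\{0,1\}^V$ such that $Gf(x)$ has a chordless positive cycle of length $k$, then $f$ has at most one fixed point. (2) If for every $1\le k\le |V|$ there are at most $2^k-1$ points $x\in\{0,1\}^V$ such that $Gf(x)$ has a chordless negative cycle of length $k$, then $f$ has at least one fixed point.
   Context: $d$ is the Hamming distance; $f$ is non-expansive if $d(f(x),f(y))\le d(x,y)$ for all $x,y$. For $x^{j\alpha}$ the point equal to $x$ except its $j$-component is $\alpha$, the local interaction graph $Gf(x)$ is the signed digraph on $V$ with a positive arc from $j$ to $i$ if $f_i(x^{j1})-f_i(x^{j0})=1$ and a negative arc if it equals $-1$ (loops allowed). A cycle of a signed digraph $G$ is a subgraph whose underlying unsigned digraph is a directed cycle (length = number of arcs); it is positive (negative) if it has an even (odd) number of negative arcs; it is chordless if its underlying unsigned digraph is an induced subgraph of the underlying unsigned digraph of $G$. *)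

theory Defs
  imports Main
begin

text \<open>Points of {0,1}^V are functions V \<Rightarrow> bool (True = 1), V a finite type.\<close>

definition hamming :: "('v::finite \<Rightarrow> bool) \<Rightarrow> ('v \<Rightarrow> bool) \<Rightarrow> nat" where
  "hamming x y = card {i. x i \<noteq> y i}"

definition non_expansive :: "(('v::finite \<Rightarrow> bool) \<Rightarrow> ('v \<Rightarrow> bool)) \<Rightarrow> bool" where
  "non_expansive f \<longleftrightarrow> (\<forall>x y. hamming (f x) (f y) \<le> hamming x y)"

text \<open>Sign of the arc j \<rightarrow> i in Gf(x): f_i(x^{j1}) - f_i(x^{j0}) \<in> {-1,0,1};
  0 means no arc, 1 a positive arc, -1 a negative arc.\<close>
definition arc_sign :: "(('v \<Rightarrow> bool) \<Rightarrow> ('v \<Rightarrow> bool)) \<Rightarrow> ('v \<Rightarrow> bool) \<Rightarrow> 'v \<Rightarrow> 'v \<Rightarrow> int" where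
  "arc_sign f x j i = of_bool (f (x(j := True)) i) - of_bool (f (x(j := False)) i)"

definition arc :: "(('v \<Rightarrow> bool) \<Rightarrow> ('v \<Rightarrow> bool)) \<Rightarrow> ('v \<Rightarrow> bool) \<Rightarrow> 'v \<Rightarrow> 'v \<Rightarrow> bool" where
  "arc f x j i \<longleftrightarrow> arc_sign f x j i \<noteq> 0"

text \<open>Since Gf(x) has at most one arc per
  ordered pair, the cycle is determined by its vertex sequence.\<close>
definition is_cycle :: "(('v \<Rightarrow> bool) \<Rightarrow> ('v \<Rightarrow> bool)) \<Rightarrow> ('v \<Rightarrow> bool) \<Rightarrow> 'v list \<Rightarrow> bool" where
  "is_cycle f x cs \<longleftrightarrow> cs \<noteq> [] \<and> distinct cs \<and>
     (\<forall>t < length cs. arc f x (cs ! t) (cs ! ((t + 1) mod length cs)))"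

definition chordless :: "(('v \<Rightarrow> bool) \<Rightarrow> ('v \<Rightarrow> bool)) \<Rightarrow> ('v \<Rightarrow> bool) \<Rightarrow> 'v list \<Rightarrow> bool" where
  "chordless f x cs \<longleftrightarrow> (\<forall>u \<in> set cs. \<forall>v \<in> set cs. arc f x u v \<longrightarrow>
     (\<exists>t < length cs. u = cs ! t \<and> v = cs ! ((t + 1) mod length cs)))"

definition num_neg_arcs :: "(('v \<Rightarrow> bool) \<Rightarrow> ('v \<Rightarrow> bool)) \<Rightarrow> ('v \<Rightarrow> bool) \<Rightarrow> 'v list \<Rightarrow> nat" where
  "num_neg_arcs f x cs = card {t. t < length cs \<and> arc_sign f x (cs ! t) (cs ! ((t + 1) mod length cs)) = -1}"

definition has_chordless_pos_cycle :: "(('v \<Rightarrow> bool) \<Rightarrow> ('v \<Rightarrow> bool)) \<Rightarrow> ('v \<Rightarrow> bool) \<Rightarrow> nat \<Rightarrow> bool" where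
  "has_chordless_pos_cycle f x k \<longleftrightarrow> (\<exists>cs. is_cycle f x cs \<and> chordless f x cs \<and>
     length cs = k \<and> even (num_neg_arcs f x cs))"

definition has_chordless_neg_cycle :: "(('v \<Rightarrow> bool) \<Rightarrow> ('v \<Rightarrow> bool)) \<Rightarrow> ('v \<Rightarrow> bool) \<Rightarrow> nat \<Rightarrow> bool" where
  "has_chordless_neg_cycle f x k \<longleftrightarrow> (\<exists>cs. is_cycle f x cs \<and> chordless f x cs \<and>
     length cs = k \<and> odd (num_neg_arcs f x cs))"

end

theory Submission
  imports Defs
begin

text \<open>
  Let x, y be fixed points of a non-expansive \<open>\<phi>\<close> at minimal distance (within a suitable class)
  and let I be the set of coordinates where they differ. Non-expansiveness forces \<open>\<phi>\<close> to act on
  the interval between x and y by a permutation \<open>\<pi>\<close> of I: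
  \<open>\<phi> (toggle x A) = toggle x (\<pi> ` A)\<close> for \<open>A \<subseteq> I\<close>.
  Hence at each of the \<open>2^|I|\<close> points of the interval a cycle of \<open>\<pi>\<close> is a cycle of the local
  interaction graph whose arc \<open>a \<rightarrow> \<pi> a\<close> is negative exactly when \<open>x a \<noteq> x (\<pi> a)\<close>; such a
  cycle is positive. This gives (1).
  For (2), induct on the dimension of a subcube mapped into itself by a fixed-point-free f.
  Freezing a coordinate j either gives a smaller fixed-point-free instance, or provides fixed
  points, on both sides of j, of the map f' obtained from f by negating its j-th component.
  The closest such pair yields a positive cycle of Gf' through j, which is negative in Gf
  because exactly the arc entering j changes sign.
  All these cycles are chordless since a non-expansive map has local out-degree at most one.
\<close>

definition toggle :: "('v \<Rightarrow> bool) \<Rightarrow> 'v set \<Rightarrow> 'v \<Rightarrow> bool" where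
  "toggle x A = (\<lambda>i. if i \<in> A then \<not> x i else x i)"

definition diff_coords :: "('v \<Rightarrow> bool) \<Rightarrow> ('v \<Rightarrow> bool) \<Rightarrow> 'v set" where
  "diff_coords x y = {i. x i \<noteq> y i}"

definition subcube :: "'v set \<Rightarrow> ('v \<Rightarrow> bool) \<Rightarrow> ('v \<Rightarrow> bool) set" where
  "subcube J x = {z. \<forall>i. i \<notin> J \<longrightarrow> z i = x i}"

lemma toggle_diff_coords [simp]: "toggle x (diff_coords x y) = y"
  by (auto simp: toggle_def diff_coords_def fun_eq_iff)

lemma diff_coords_toggle [simp]: "diff_coords x (toggle x A) = A"
  by (auto simp: toggle_def diff_coords_def)

lemma diff_coords_self [simp]: "diff_coords x x = {}"
  by (simp add: diff_coords_def)

lemma toggle_empty [simp]: "toggle x {} = x"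
  by (simp add: toggle_def)

lemma diff_coords_toggle_toggle: "diff_coords (toggle x A) (toggle x B) = (A - B) \<union> (B - A)"
  by (auto simp: toggle_def diff_coords_def)

lemma hamming_eq_card_diff_coords: "hamming x y = card (diff_coords x y)"
  by (simp add: hamming_def diff_coords_def)

lemma card_toggle_Pow: "card (toggle x ` Pow (I :: 'v::finite set)) = 2 ^ card I"
proof -
  have "inj_on (toggle x) (Pow I)"
    by (rule inj_on_inverseI[where g="diff_coords x"]) simp
  then show ?thesis by (simp add: card_image card_Pow)
qed

lemma two_pow_le_card_if_toggles:
  fixes x :: "'v::finite \<Rightarrow> bool"
  assumes "\<And>A. A \<subseteq> I \<Longrightarrow> P (toggle x A)" and "p \<le> card I"
  shows "2 ^ p \<le> card {z. P z}"
proof -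
  have "(2::nat) ^ p \<le> 2 ^ card I" using assms(2) by (simp add: power_increasing)
  also have "\<dots> = card (toggle x ` Pow I)" by (simp add: card_toggle_Pow)
  also have "\<dots> \<le> card {z. P z}" using assms(1) by (intro card_mono) auto
  finally show ?thesis .
qed

lemma subcube_empty: "subcube {} x = {x}"
  by (auto simp: subcube_def)

lemma toggle_in_subcube: "x \<in> subcube J y \<Longrightarrow> A \<subseteq> J \<Longrightarrow> toggle x A \<in> subcube J y"
  by (auto simp: subcube_def toggle_def)

lemma diff_coords_subcube: "x \<in> subcube J z \<Longrightarrow> y \<in> subcube J z \<Longrightarrow> diff_coords x y \<subseteq> J"
  by (auto simp: subcube_def diff_coords_def)

section \<open>Minimal fixed intervals are permuted\<close>

lemma ex_nonempty_subset_image_eq: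
  fixes I :: "'a::finite set"
  assumes "I \<noteq> {}" and "\<pi> ` I \<subseteq> I"
  shows "\<exists>J \<subseteq> I. J \<noteq> {} \<and> \<pi> ` J = J"
proof -
  define P where "P J \<longleftrightarrow> J \<subseteq> I \<and> J \<noteq> {} \<and> \<pi> ` J \<subseteq> J" for J
  obtain J where J: "P J" and least: "\<And>J'. P J' \<Longrightarrow> card J \<le> card J'"
    using ex_has_least_nat[of P I card] assms by (auto simp: P_def)
  have "P (\<pi> ` J)" using J by (auto simp: P_def)
  then have "card J \<le> card (\<pi> ` J)" by (rule least)
  with J card_image_le[of J \<pi>] have "\<pi> ` J = J"
    unfolding P_def by (metis card_subset_eq finite le_antisym)
  with J show ?thesis by (auto simp: P_def)
qed

context
  fixes G :: "'a::finite set \<Rightarrow> 'a set" and I :: "'a set"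
  assumes contraction: "\<And>A B. card ((G A - G B) \<union> (G B - G A)) \<le> card ((A - B) \<union> (B - A))"
    and G_empty: "G {} = {}" and G_top: "G I = I"
begin

lemma contraction_preserves_card:
  assumes "A \<subseteq> I"
  shows "G A \<subseteq> I" and "card (G A) = card A"
proof -
  have le: "card (G A) \<le> card A"
    using contraction[of A "{}"] by (simp add: G_empty)
  have "card ((G A - I) \<union> (I - G A)) \<le> card (I - A)"
    using contraction[of A I] assms by (simp add: G_top Un_absorb1 Diff_eq_empty_iff[THEN iffD2])
  moreover have "card ((G A - I) \<union> (I - G A)) = card (G A - I) + card (I - G A)"
    by (rule card_Un_disjoint) auto
  moreover have "card I - card (G A) \<le> card (I - G A)"
    by (rule diff_card_le_card_Diff) simp
  moreover have "card (I - A) = card I - card A" and "card A \<le> card I"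
    using assms by (simp_all add: card_Diff_subset card_mono)
  ultimately have "card (G A - I) = 0" and "card (I - G A) \<le> card I - card A"
    using le by linarith+
  then show "G A \<subseteq> I" by simp
  then show "card (G A) = card A"
    using le \<open>card (I - G A) \<le> card I - card A\<close> \<open>card A \<le> card I\<close>
    by (simp add: card_Diff_subset)
qed

lemma contraction_mono:
  assumes "A \<subseteq> B" and "B \<subseteq> I"
  shows "G A \<subseteq> G B"
proof -
  have "card (G A - G B) + card (G B - G A) = card ((G A - G B) \<union> (G B - G A))"
    by (rule card_Un_disjoint[symmetric]) auto
  also have "\<dots> \<le> card (B - A)"
    using contraction[of A B] assms(1) by (simp add: Diff_eq_empty_iff[THEN iffD2])
  also have "\<dots> = card (G B) - card (G A)"
    using assms contraction_preserves_card(2) by (simp add: card_Diff_subset)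
  also have "\<dots> \<le> card (G B - G A)"
    by (rule diff_card_le_card_Diff) simp
  finally show ?thesis by simp
qed

lemma contraction_is_permutation:
  assumes "I \<noteq> {}" and minimal: "\<And>J. J \<subseteq> I \<Longrightarrow> J \<noteq> {} \<Longrightarrow> G J = J \<Longrightarrow> J = I"
  shows "\<exists>\<pi>. inj \<pi> \<and> \<pi> ` I = I \<and> (\<forall>A \<subseteq> I. G A = \<pi> ` A)"
proof -
  define \<pi> where "\<pi> a = (if a \<in> I then the_elem (G {a}) else a)" for a
  have atom: "G {a} = {\<pi> a}" if "a \<in> I" for a
  proof -
    have "card (G {a}) = 1" using contraction_preserves_card(2)[of "{a}"] that by simp
    then obtain b where "G {a} = {b}" by (rule card_1_singletonE)
    with that show ?thesis by (simp add: \<pi>_def)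
  qed
  have image_subset: "\<pi> ` A \<subseteq> G A" if "A \<subseteq> I" for A
  proof
    fix b assume "b \<in> \<pi> ` A"
    then obtain a where "a \<in> A" "b = \<pi> a" by blast
    with that show "b \<in> G A" using atom[of a] contraction_mono[of "{a}" A] by auto
  qed
  \<comment> \<open>A nonempty \<open>\<pi>\<close>-invariant subset is fixed by G, so by minimality it is all of I.\<close>
  have "\<pi> ` I \<subseteq> I" using image_subset[of I] G_top by simp
  then obtain J where J: "J \<subseteq> I" "J \<noteq> {}" "\<pi> ` J = J"
    using ex_nonempty_subset_image_eq[OF assms(1)] by metis
  have "G J = J"
    using image_subset[of J] contraction_preserves_card(2)[of J] J
    by (metis card_subset_eq finite)
  then have "J = I" using minimal J(1,2) by blast
  with J(3) have surj: "\<pi> ` I = I" by simp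
  then have inj_I: "inj_on \<pi> I" by (simp add: eq_card_imp_inj_on)
  have "inj \<pi>"
  proof (rule injI)
    fix a b assume "\<pi> a = \<pi> b"
    moreover have "\<pi> a \<in> I \<longleftrightarrow> a \<in> I" for a
    proof (cases "a \<in> I")
      case True
      then have "\<pi> a \<in> \<pi> ` I" by blast
      with True surj show ?thesis by simp
    qed (simp add: \<pi>_def)
    ultimately show "a = b" using inj_I unfolding inj_on_def \<pi>_def by metis
  qed
  moreover have "G A = \<pi> ` A" if "A \<subseteq> I" for A
    using image_subset[OF that] contraction_preserves_card(2)[OF that]
      card_image[OF inj_on_subset[OF inj_I that]]
    by (metis card_subset_eq finite)
  ultimately show ?thesis using surj by blast
qed

end

lemma fixed_interval_permutes:
  fixes \<phi> :: "('v::finite \<Rightarrow> bool) \<Rightarrow> ('v \<Rightarrow> bool)"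
  assumes "non_expansive \<phi>" and "\<phi> x = x" and "\<phi> (toggle x I) = toggle x I" and "I \<noteq> {}"
    and minimal: "\<And>J. J \<subseteq> I \<Longrightarrow> J \<noteq> {} \<Longrightarrow> \<phi> (toggle x J) = toggle x J \<Longrightarrow> J = I"
  shows "\<exists>\<pi>. inj \<pi> \<and> \<pi> ` I = I \<and> (\<forall>A \<subseteq> I. \<phi> (toggle x A) = toggle x (\<pi> ` A))"
proof -
  \<comment> \<open>\<open>\<phi>\<close> in coordinates relative to x; non-expansive means symmetric-difference contraction.\<close>
  define G where "G A = diff_coords x (\<phi> (toggle x A))" for A
  have \<phi>_toggle: "\<phi> (toggle x A) = toggle x (G A)" for A
    by (simp add: G_def)
  have "card ((G A - G B) \<union> (G B - G A)) \<le> card ((A - B) \<union> (B - A))" for A B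
    using assms(1) unfolding non_expansive_def hamming_eq_card_diff_coords
    by (metis \<phi>_toggle diff_coords_toggle_toggle)
  moreover have "G {} = {}" and "G I = I"
    using assms(2,3) by (simp_all add: G_def)
  moreover have "J = I" if "J \<subseteq> I" "J \<noteq> {}" "G J = J" for J
    using minimal[OF that(1,2)] that(3) by (simp add: \<phi>_toggle)
  ultimately obtain \<pi> where "inj \<pi>" "\<pi> ` I = I" "\<forall>A \<subseteq> I. G A = \<pi> ` A"
    using contraction_is_permutation[of G I] assms(4) by blast
  then show ?thesis by (auto simp: \<phi>_toggle)
qed

section \<open>Positive cycles: at most one fixed point\<close>

abbreviation cyclic_succ :: "'a list \<Rightarrow> nat \<Rightarrow> 'a" where
  "cyclic_succ cs t \<equiv> cs ! ((t + 1) mod length cs)"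

definition cycle_list :: "('a \<Rightarrow> 'a) \<Rightarrow> 'a list \<Rightarrow> bool" where
  "cycle_list \<pi> cs \<longleftrightarrow> cs \<noteq> [] \<and> distinct cs \<and> (\<forall>t < length cs. cyclic_succ cs t = \<pi> (cs ! t))"

lemma cycle_list_through:
  fixes \<pi> :: "'a::finite \<Rightarrow> 'a"
  assumes "inj \<pi>" and "\<pi> ` I \<subseteq> I" and "u \<in> I"
  obtains cs where "cycle_list \<pi> cs" and "u \<in> set cs" and "set cs \<subseteq> I"
proof -
  have "\<exists>n. 0 < n \<and> (\<pi> ^^ n) u = u"
    using funpow_inj_finite[OF assms(1)] by (metis finite)
  then obtain p where p: "0 < p" "(\<pi> ^^ p) u = u"
    and least: "\<And>m. 0 < m \<Longrightarrow> m < p \<Longrightarrow> (\<pi> ^^ m) u \<noteq> u"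
    unfolding exists_least_iff[of "\<lambda>n. 0 < n \<and> (\<pi> ^^ n) u = u"] by blast
  define cs where "cs = map (\<lambda>k. (\<pi> ^^ k) u) [0..<p]"
  have "distinct cs"
    using inj_on_funpow_least[of p \<pi> u] p(2) least by (simp add: cs_def distinct_map)
  moreover have "cyclic_succ cs t = \<pi> (cs ! t)" if "t < length cs" for t
  proof (cases "t + 1 < p")
    case True
    with that show ?thesis by (simp add: cs_def)
  next
    case False
    with that have "t + 1 = p" by (simp add: cs_def)
    with p that show ?thesis by (auto simp: cs_def)
  qed
  moreover have "(\<pi> ^^ k) u \<in> I" for k
    using assms(2,3) by (induction k) auto
  ultimately show ?thesis
    using that[of cs] p(1) by (force simp: cycle_list_def cs_def)
qed

lemma odd_card_changes_iff:
  fixes b :: "nat \<Rightarrow> bool"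
  shows "odd (card {t. t < n \<and> b t \<noteq> b (Suc t)}) \<longleftrightarrow> b 0 \<noteq> b n"
proof (induction n)
  case (Suc n)
  let ?C = "{t. t < n \<and> b t \<noteq> b (Suc t)}"
  show ?case
  proof (cases "b n = b (Suc n)")
    case True
    then have "{t. t < Suc n \<and> b t \<noteq> b (Suc t)} = ?C"
      by (auto simp: less_Suc_eq)
    with True Suc.IH show ?thesis by simp
  next
    case False
    then have "{t. t < Suc n \<and> b t \<noteq> b (Suc t)} = insert n ?C"
      by (auto simp: less_Suc_eq)
    moreover have "(b 0 \<noteq> b (Suc n)) \<longleftrightarrow> \<not> (b 0 \<noteq> b n)"
      using False by blast
    ultimately show ?thesis using Suc.IH by simp
  qed
qed simp

lemma even_card_cyclic_changes:
  fixes b :: "nat \<Rightarrow> bool"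
  assumes "0 < n"
  shows "even (card {t. t < n \<and> b t \<noteq> b ((t + 1) mod n)})"
proof -
  let ?b = "\<lambda>t. b (t mod n)"
  have "{t. t < n \<and> b t \<noteq> b ((t + 1) mod n)} = {t. t < n \<and> ?b t \<noteq> ?b (Suc t)}"
    by (intro Collect_cong) (auto simp: mod_less)
  moreover have "?b 0 = ?b n" by simp
  ultimately show ?thesis
    using odd_card_changes_iff[of n ?b] by metis
qed

lemma arc_sign_toggle_permuted:
  assumes perm: "\<forall>A \<subseteq> I. \<phi> (toggle x A) = toggle x (\<pi> ` A)" and "inj \<pi>"
    and "A \<subseteq> I" and "a \<in> I"
  shows "arc_sign \<phi> (toggle x A) a (\<pi> a) = (if x a = x (\<pi> a) then 1 else -1)"
proof -
  have "\<phi> ((toggle x A)(a := b)) (\<pi> a) = (if b = x a then x (\<pi> a) else \<not> x (\<pi> a))" for b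
  proof -
    define B where "B = (if b = x a then A - {a} else insert a A)"
    have "(toggle x A)(a := b) = toggle x B"
      by (auto simp: B_def toggle_def fun_eq_iff)
    moreover have "B \<subseteq> I"
      using assms(3,4) by (auto simp: B_def)
    moreover have "a \<in> B \<longleftrightarrow> b \<noteq> x a"
      by (simp add: B_def)
    ultimately show ?thesis
      using perm inj_image_mem_iff[OF \<open>inj \<pi>\<close>] by (auto simp: toggle_def)
  qed
  then show ?thesis
    by (cases "x a"; cases "x (\<pi> a)") (simp_all add: arc_sign_def)
qed

lemma permuted_interval_pos_cycle:
  assumes perm: "\<forall>A \<subseteq> I. \<phi> (toggle x A) = toggle x (\<pi> ` A)" and "inj \<pi>"
    and cs: "cycle_list \<pi> cs" "set cs \<subseteq> I" and "A \<subseteq> I"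
  shows "is_cycle \<phi> (toggle x A) cs" and "even (num_neg_arcs \<phi> (toggle x A) cs)"
proof -
  have sign: "arc_sign \<phi> (toggle x A) (cs ! t) (cyclic_succ cs t) =
      (if x (cs ! t) = x (cyclic_succ cs t) then 1 else -1)" if "t < length cs" for t
  proof -
    have "cs ! t \<in> I" using cs(2) nth_mem[OF that] by blast
    moreover have "cyclic_succ cs t = \<pi> (cs ! t)"
      using cs(1) that by (simp add: cycle_list_def)
    ultimately show ?thesis
      using arc_sign_toggle_permuted[OF perm \<open>inj \<pi>\<close> \<open>A \<subseteq> I\<close>] by metis
  qed
  have "arc \<phi> (toggle x A) (cs ! t) (cyclic_succ cs t)" if "t < length cs" for t
    unfolding arc_def sign[OF that] by simp
  then show "is_cycle \<phi> (toggle x A) cs"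
    using cs(1) unfolding is_cycle_def cycle_list_def by blast
  have "{t. t < length cs \<and> arc_sign \<phi> (toggle x A) (cs ! t) (cyclic_succ cs t) = -1} =
      {t. t < length cs \<and> x (cs ! t) \<noteq> x (cyclic_succ cs t)}"
  proof (rule Collect_cong)
    fix t
    show "(t < length cs \<and> arc_sign \<phi> (toggle x A) (cs ! t) (cyclic_succ cs t) = -1) \<longleftrightarrow>
        (t < length cs \<and> x (cs ! t) \<noteq> x (cyclic_succ cs t))"
      using sign[of t] by (cases "t < length cs") simp_all
  qed
  moreover have "length cs > 0"
    using cs(1) by (simp add: cycle_list_def)
  ultimately show "even (num_neg_arcs \<phi> (toggle x A) cs)"
    unfolding num_neg_arcs_def
    using even_card_cyclic_changes[of "length cs" "\<lambda>t. x (cs ! t)"] by metis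
qed

lemma minimal_fixed_interval_pos_cycle:
  fixes \<phi> :: "('v::finite \<Rightarrow> bool) \<Rightarrow> ('v \<Rightarrow> bool)"
  assumes "non_expansive \<phi>" and "\<phi> x = x" and "\<phi> (toggle x I) = toggle x I" and "v \<in> I"
    and "\<And>J. J \<subseteq> I \<Longrightarrow> J \<noteq> {} \<Longrightarrow> \<phi> (toggle x J) = toggle x J \<Longrightarrow> J = I"
  obtains cs where "v \<in> set cs" and "set cs \<subseteq> I"
    and "\<And>A. A \<subseteq> I \<Longrightarrow> is_cycle \<phi> (toggle x A) cs \<and> even (num_neg_arcs \<phi> (toggle x A) cs)"
proof -
  obtain \<pi> where \<pi>: "inj \<pi>" "\<pi> ` I = I" "\<forall>A \<subseteq> I. \<phi> (toggle x A) = toggle x (\<pi> ` A)"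
    using fixed_interval_permutes[of \<phi> x I] assms by auto
  obtain cs where cs: "cycle_list \<pi> cs" "v \<in> set cs" "set cs \<subseteq> I"
    using cycle_list_through[OF \<pi>(1) equalityD1[OF \<pi>(2)] \<open>v \<in> I\<close>] .
  show ?thesis
  proof (rule that)
    show "is_cycle \<phi> (toggle x A) cs \<and> even (num_neg_arcs \<phi> (toggle x A) cs)" if "A \<subseteq> I" for A
      using permuted_interval_pos_cycle[OF \<pi>(3,1) cs(1,3) that] by blast
  qed (use cs in auto)
qed

lemma arc_iff: "arc f x j i \<longleftrightarrow> f (x(j := True)) i \<noteq> f (x(j := False)) i"
  by (cases "f (x(j := True)) i"; cases "f (x(j := False)) i") (simp_all add: arc_def arc_sign_def)

lemma non_expansive_arc_unique:
  fixes f :: "('v::finite \<Rightarrow> bool) \<Rightarrow> ('v \<Rightarrow> bool)"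
  assumes "non_expansive f" and "arc f z a i" and "arc f z a i'"
  shows "i = i'"
proof -
  let ?D = "diff_coords (f (z(a := True))) (f (z(a := False)))"
  have "card ?D \<le> card (diff_coords (z(a := True)) (z(a := False)))"
    using assms(1) unfolding non_expansive_def hamming_eq_card_diff_coords by blast
  also have "diff_coords (z(a := True)) (z(a := False)) = {a}"
    by (auto simp: diff_coords_def)
  also have "card {a} = Suc 0" by simp
  finally have "card ?D \<le> Suc 0" .
  moreover have "i \<in> ?D" and "i' \<in> ?D"
    using assms(2,3) unfolding arc_iff diff_coords_def by blast+
  ultimately show ?thesis
    by (auto simp: card_le_Suc0_iff_eq)
qed

lemma non_expansive_cycle_chordless:
  fixes f :: "('v::finite \<Rightarrow> bool) \<Rightarrow> ('v \<Rightarrow> bool)"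
  assumes "non_expansive f" and "is_cycle f z cs"
  shows "chordless f z cs"
  unfolding chordless_def
proof (intro ballI impI)
  fix u v assume "u \<in> set cs" and "arc f z u v"
  then obtain t where t: "t < length cs" "u = cs ! t"
    by (auto simp: in_set_conv_nth)
  with assms(2) have "arc f z u (cyclic_succ cs t)"
    by (simp add: is_cycle_def)
  with \<open>arc f z u v\<close> have "v = cyclic_succ cs t"
    using non_expansive_arc_unique[OF assms(1)] by blast
  with t show "\<exists>t<length cs. u = cs ! t \<and> v = cyclic_succ cs t" by blast
qed

lemma ex_least_pair:
  fixes m :: "'a \<Rightarrow> 'b \<Rightarrow> nat"
  assumes "P a b"
  obtains x y where "P x y" and "\<And>x' y'. P x' y' \<Longrightarrow> m x y \<le> m x' y'"
proof -
  have "\<exists>xy. case_prod P xy \<and> (\<forall>xy'. case_prod P xy' \<longrightarrow> case_prod m xy \<le> case_prod m xy')"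
    by (rule ex_has_least_nat[of _ "(a, b)"]) (simp add: assms)
  then obtain x y where "P x y" and "\<forall>xy'. case_prod P xy' \<longrightarrow> m x y \<le> case_prod m xy'"
    by auto
  then show ?thesis
    using that by auto
qed

lemma two_fixed_points_pos_cycles:
  fixes f :: "('v::finite \<Rightarrow> bool) \<Rightarrow> ('v \<Rightarrow> bool)"
  assumes ne: "non_expansive f" and "f a = a" and "f c = c" and "a \<noteq> c"
  shows "\<exists>p\<ge>1. p \<le> card (UNIV :: 'v set) \<and> 2 ^ p \<le> card {z. has_chordless_pos_cycle f z p}"
proof -
  obtain x y where fixed: "f x = x \<and> f y = y \<and> x \<noteq> y"
    and closest: "\<And>x' y'. f x' = x' \<and> f y' = y' \<and> x' \<noteq> y' \<Longrightarrow> hamming x y \<le> hamming x' y'"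
    using ex_least_pair[of "\<lambda>x y. f x = x \<and> f y = y \<and> x \<noteq> y" a c hamming] assms(2-4) by blast
  define I where "I = diff_coords x y"
  have y: "toggle x I = y" by (simp add: I_def)
  then obtain v where "v \<in> I" using fixed by fastforce
  have "J = I" if "J \<subseteq> I" "J \<noteq> {}" "f (toggle x J) = toggle x J" for J
  proof -
    have "toggle x J \<noteq> x"
      using that(2) by (metis diff_coords_self diff_coords_toggle)
    then have "card I \<le> card J"
      using closest[of x "toggle x J"] fixed that(3) by (simp add: hamming_eq_card_diff_coords I_def)
    with that(1) show ?thesis by (metis card_subset_eq finite card_mono le_antisym)
  qed
  then obtain cs where cs: "v \<in> set cs" "set cs \<subseteq> I"
    and cycles: "\<And>A. A \<subseteq> I \<Longrightarrow> is_cycle f (toggle x A) cs \<and> even (num_neg_arcs f (toggle x A) cs)"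
    using minimal_fixed_interval_pos_cycle[of f x I v] ne fixed y \<open>v \<in> I\<close> by blast
  have "is_cycle f x cs" using cycles[of "{}"] by simp
  then have "length cs \<le> card I"
    using cs(2) by (metis card_mono distinct_card finite is_cycle_def)
  moreover have "has_chordless_pos_cycle f (toggle x A) (length cs)" if "A \<subseteq> I" for A
    using cycles[OF that] non_expansive_cycle_chordless[OF ne]
    unfolding has_chordless_pos_cycle_def by blast
  ultimately have "2 ^ length cs \<le> card {z. has_chordless_pos_cycle f z (length cs)}"
    by (rule two_pow_le_card_if_toggles[rotated])
  moreover have "1 \<le> length cs" and "card I \<le> card (UNIV :: 'v set)"
    using cs(1) by (auto simp: Suc_le_eq card_mono)
  ultimately show ?thesis
    using \<open>length cs \<le> card I\<close> by (intro exI[of _ "length cs"]) auto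
qed

section \<open>Negative cycles: existence of a fixed point\<close>

definition clamp_coord ::
    "(('v \<Rightarrow> bool) \<Rightarrow> ('v \<Rightarrow> bool)) \<Rightarrow> 'v \<Rightarrow> bool \<Rightarrow> ('v \<Rightarrow> bool) \<Rightarrow> ('v \<Rightarrow> bool)" where
  "clamp_coord f j b z = (f z)(j := b)"

definition negate_coord ::
    "(('v \<Rightarrow> bool) \<Rightarrow> ('v \<Rightarrow> bool)) \<Rightarrow> 'v \<Rightarrow> ('v \<Rightarrow> bool) \<Rightarrow> ('v \<Rightarrow> bool)" where
  "negate_coord f j z = (f z)(j := \<not> f z j)"

lemma negate_coord_negate_coord [simp]: "negate_coord (negate_coord f j) j = f"
  by (simp add: negate_coord_def fun_eq_iff)

lemma non_expansive_clamp_coord: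
  assumes "non_expansive (f :: ('v::finite \<Rightarrow> bool) \<Rightarrow> ('v \<Rightarrow> bool))"
  shows "non_expansive (clamp_coord f j b)"
  unfolding non_expansive_def
proof (intro allI)
  fix z w
  have "hamming (clamp_coord f j b z) (clamp_coord f j b w) \<le> hamming (f z) (f w)"
    unfolding hamming_def clamp_coord_def by (rule card_mono) auto
  also have "\<dots> \<le> hamming z w"
    using assms by (simp add: non_expansive_def)
  finally show "hamming (clamp_coord f j b z) (clamp_coord f j b w) \<le> hamming z w" .
qed

lemma non_expansive_negate_coord:
  assumes "non_expansive (f :: ('v::finite \<Rightarrow> bool) \<Rightarrow> ('v \<Rightarrow> bool))"
  shows "non_expansive (negate_coord f j)"
  unfolding non_expansive_def
proof (intro allI)
  fix z w
  have "hamming (negate_coord f j z) (negate_coord f j w) = hamming (f z) (f w)"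
    unfolding hamming_def negate_coord_def by (rule arg_cong[where f=card]) auto
  also have "\<dots> \<le> hamming z w"
    using assms by (simp add: non_expansive_def)
  finally show "hamming (negate_coord f j z) (negate_coord f j w) \<le> hamming z w" .
qed

lemma arc_sign_clamp_coord: "i \<noteq> j \<Longrightarrow> arc_sign (clamp_coord f j b) z a i = arc_sign f z a i"
  by (simp add: arc_sign_def clamp_coord_def)

lemma arc_sign_negate_coord:
  "arc_sign (negate_coord f j) z a i = (if i = j then - arc_sign f z a i else arc_sign f z a i)"
  by (simp add: arc_sign_def negate_coord_def)

lemma arc_negate_coord [simp]: "arc (negate_coord f j) = arc f"
  by (simp add: arc_def arc_sign_negate_coord fun_eq_iff)

lemma is_cycle_negate_coord [simp]: "is_cycle (negate_coord f j) = is_cycle f"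
  by (simp add: is_cycle_def fun_eq_iff)

lemma cyclic_succ_less: "t < length cs \<Longrightarrow> (t + 1) mod length cs < length cs"
  by (metis mod_less_divisor gr_implies_not0 not_gr0)

lemma cyclic_succ_in_set: "t < length cs \<Longrightarrow> cyclic_succ cs t \<in> set cs"
  using cyclic_succ_less nth_mem by blast

lemma cyclic_index_pred:
  fixes n :: nat
  assumes "t < n" and "k < n"
  shows "(t + 1) mod n = k \<longleftrightarrow> t = (if k = 0 then n - 1 else k - 1)"
proof (cases "t + 1 < n")
  case False
  with assms have "t + 1 = n" by simp
  with assms show ?thesis by auto
qed (use assms in auto)

lemma arc_sign_cases: "arc_sign f x j i \<in> {-1, 0, 1}"
  by (simp add: arc_sign_def)

lemma odd_card_toggle_member:
  assumes "finite A"
  shows "odd (card (if a \<in> A then A - {a} else insert a A)) \<longleftrightarrow> even (card A)"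
proof (cases "a \<in> A")
  case True
  with assms have "card A = Suc (card (A - {a}))"
    by (metis card_Suc_Diff1)
  with True show ?thesis by simp
qed (use assms in simp)

lemma odd_num_neg_arcs_negate_coord:
  assumes "is_cycle f z cs" and "j \<in> set cs"
  shows "odd (num_neg_arcs (negate_coord f j) z cs) \<longleftrightarrow> even (num_neg_arcs f z cs)"
proof -
  let ?n = "length cs"
  let ?N = "\<lambda>g. {t. t < ?n \<and> arc_sign g z (cs ! t) (cyclic_succ cs t) = -1}"
  obtain k where k: "k < ?n" "cs ! k = j"
    using assms(2) by (auto simp: in_set_conv_nth)
  define t0 where "t0 = (if k = 0 then ?n - 1 else k - 1)"
  have into_j: "cyclic_succ cs t = j \<longleftrightarrow> t = t0" if "t < ?n" for t
  proof -
    have "(t + 1) mod ?n < ?n" using that by (rule cyclic_succ_less)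
    then have "cyclic_succ cs t = cs ! k \<longleftrightarrow> (t + 1) mod ?n = k"
      using k(1) assms(1) by (simp add: is_cycle_def nth_eq_iff_index_eq)
    then show ?thesis
      using cyclic_index_pred[OF that k(1)] k(2) by (simp add: t0_def)
  qed
  have t0: "t0 < ?n"
    using k(1) unfolding t0_def by (simp split: if_split) linarith
  have nonzero: "arc_sign f z (cs ! t) (cyclic_succ cs t) \<in> {-1, 1}" if "t < ?n" for t
    using assms(1) that arc_sign_cases[of f z "cs ! t" "cyclic_succ cs t"]
    by (auto simp: is_cycle_def arc_def)
  have neg_set: "?N (negate_coord f j) = (if t0 \<in> ?N f then ?N f - {t0} else insert t0 (?N f))"
  proof -
    have "t \<in> ?N (negate_coord f j) \<longleftrightarrow> t < ?n \<and> (t = t0 \<longleftrightarrow> t \<notin> ?N f)" for t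
    proof (cases "t < ?n")
      case True
      then show ?thesis
        using into_j[OF True] nonzero[OF True] by (auto simp: arc_sign_negate_coord)
    qed simp
    then show ?thesis using t0 by auto
  qed
  then show ?thesis
    using odd_card_toggle_member[of "?N f" t0] by (simp add: num_neg_arcs_def)
qed

definition has_neg_cycle_within ::
    "(('v \<Rightarrow> bool) \<Rightarrow> ('v \<Rightarrow> bool)) \<Rightarrow> 'v set \<Rightarrow> nat \<Rightarrow> ('v \<Rightarrow> bool) \<Rightarrow> bool" where
  "has_neg_cycle_within f J p z \<longleftrightarrow>
     (\<exists>cs. is_cycle f z cs \<and> length cs = p \<and> odd (num_neg_arcs f z cs) \<and> set cs \<subseteq> J)"

lemma has_neg_cycle_within_clamp_coord:
  assumes "j \<notin> J" and "has_neg_cycle_within (clamp_coord f j b) J p z"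
  shows "has_neg_cycle_within f (insert j J) p z"
proof -
  obtain cs where cs: "is_cycle (clamp_coord f j b) z cs" "length cs = p"
      "odd (num_neg_arcs (clamp_coord f j b) z cs)" "set cs \<subseteq> J"
    using assms(2) by (auto simp: has_neg_cycle_within_def)
  have same: "arc_sign (clamp_coord f j b) z (cs ! t) (cyclic_succ cs t) =
      arc_sign f z (cs ! t) (cyclic_succ cs t)" if "t < length cs" for t
    using cyclic_succ_in_set[OF that] cs(4) assms(1) by (auto intro: arc_sign_clamp_coord)
  then have "is_cycle f z cs"
    using cs(1) by (simp add: is_cycle_def arc_def)
  moreover have "num_neg_arcs f z cs = num_neg_arcs (clamp_coord f j b) z cs"
    unfolding num_neg_arcs_def using same by (metis (lifting))
  ultimately show ?thesis
    using cs unfolding has_neg_cycle_within_def by auto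
qed

lemma fixed_points_across_coord_neg_cycles:
  fixes \<phi> :: "('v::finite \<Rightarrow> bool) \<Rightarrow> ('v \<Rightarrow> bool)"
  assumes ne: "non_expansive \<phi>" and "a \<in> subcube K x" and "c \<in> subcube K x"
    and "\<phi> a = a" and "\<phi> c = c" and "a j \<noteq> c j"
  shows "\<exists>p\<ge>1. p \<le> card K \<and> 2 ^ p \<le> card {z. has_neg_cycle_within (negate_coord \<phi> j) K p z}"
proof -
  define Q where "Q u w \<longleftrightarrow> u \<in> subcube K x \<and> w \<in> subcube K x \<and> \<phi> u = u \<and> \<phi> w = w \<and> u j \<noteq> w j"
    for u w
  obtain u w where Quw: "Q u w" and closest: "\<And>u' w'. Q u' w' \<Longrightarrow> hamming u w \<le> hamming u' w'"
    using ex_least_pair[of Q a c hamming] assms(2-6) by (auto simp: Q_def)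
  define I where "I = diff_coords u w"
  have w: "toggle u I = w" by (simp add: I_def)
  have "j \<in> I" using Quw by (simp add: Q_def I_def diff_coords_def)
  have "I \<subseteq> K" using Quw diff_coords_subcube[of u K x w] unfolding Q_def I_def by blast
  have "J = I" if J: "J \<subseteq> I" "J \<noteq> {}" "\<phi> (toggle u J) = toggle u J" for J
  proof -
    have v: "toggle u J \<in> subcube K x"
      using toggle_in_subcube[of u K x J] Quw J(1) \<open>I \<subseteq> K\<close> unfolding Q_def by blast
    show ?thesis
    proof (cases "j \<in> J")
      case True
      then have "Q u (toggle u J)"
        using Quw v J(3) by (simp add: Q_def toggle_def)
      then have "card I \<le> card J"
        using closest by (fastforce simp: hamming_eq_card_diff_coords I_def)
      with J(1) show ?thesis by (metis card_subset_eq finite card_mono le_antisym)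
    next
      case False
      then have "Q (toggle u J) w"
        using Quw v J(3) by (simp add: Q_def toggle_def)
      then have "card I \<le> card (I - J)"
        using closest[of "toggle u J" w] J(1)
        by (metis w hamming_eq_card_diff_coords diff_coords_toggle_toggle I_def Diff_empty
            Un_empty_left Diff_eq_empty_iff)
      moreover have "card (I - J) < card I"
        using J(1,2) by (metis psubset_card_mono finite Diff_subset Diff_eq_empty_iff
            double_diff order_refl psubsetI)
      ultimately show ?thesis by linarith
    qed
  qed
  then obtain cs where cs: "j \<in> set cs" "set cs \<subseteq> I"
    and cycles: "\<And>A. A \<subseteq> I \<Longrightarrow> is_cycle \<phi> (toggle u A) cs \<and> even (num_neg_arcs \<phi> (toggle u A) cs)"
    using minimal_fixed_interval_pos_cycle[of \<phi> u I j] ne Quw w \<open>j \<in> I\<close> by (auto simp: Q_def)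
  have "is_cycle \<phi> u cs" using cycles[of "{}"] by simp
  then have "length cs \<le> card I"
    using cs(2) by (metis card_mono distinct_card finite is_cycle_def)
  moreover have "has_neg_cycle_within (negate_coord \<phi> j) K (length cs) (toggle u A)" if "A \<subseteq> I" for A
    using cycles[OF that] odd_num_neg_arcs_negate_coord[of \<phi> "toggle u A" cs j] cs \<open>I \<subseteq> K\<close>
    unfolding has_neg_cycle_within_def by auto
  ultimately have "2 ^ length cs \<le> card {z. has_neg_cycle_within (negate_coord \<phi> j) K (length cs) z}"
    by (rule two_pow_le_card_if_toggles[rotated])
  moreover have "1 \<le> length cs" and "card I \<le> card K"
    using cs(1) \<open>I \<subseteq> K\<close> by (auto simp: Suc_le_eq card_mono)
  ultimately show ?thesis
    using \<open>length cs \<le> card I\<close> by (intro exI[of _ "length cs"]) auto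
qed

lemma fixed_point_free_subcube_neg_cycles:
  fixes g :: "('v::finite \<Rightarrow> bool) \<Rightarrow> ('v \<Rightarrow> bool)"
  assumes "non_expansive g" and "g ` subcube J x \<subseteq> subcube J x" and "\<forall>z \<in> subcube J x. g z \<noteq> z"
  shows "\<exists>p\<ge>1. p \<le> card J \<and> 2 ^ p \<le> card {z. has_neg_cycle_within g J p z}"
  using finite[of J] assms
proof (induction J arbitrary: g x rule: finite_induct)
  case empty
  from empty.prems(2) have "g x = x" by (simp add: subcube_empty)
  with empty.prems(3) show ?case by (simp add: subcube_empty)
next
  case (insert j J)
  have halves: "subcube J (x(j := b)) \<subseteq> subcube (insert j J) x" for b
    by (auto simp: subcube_def)
  have clamp_maps: "clamp_coord g j b ` subcube J (x(j := b)) \<subseteq> subcube J (x(j := b))" for b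
  proof (rule image_subsetI)
    fix z assume "z \<in> subcube J (x(j := b))"
    with halves insert.prems(2) have "g z \<in> subcube (insert j J) x" by blast
    then show "clamp_coord g j b z \<in> subcube J (x(j := b))"
      by (simp add: subcube_def clamp_coord_def)
  qed
  \<comment> \<open>Fixed points of the clamped maps are fixed by \<open>negate_coord g j\<close>, as g itself has none.\<close>
  show ?case
  proof (cases "\<exists>b. \<forall>z \<in> subcube J (x(j := b)). clamp_coord g j b z \<noteq> z")
    case True
    then obtain b where "\<forall>z \<in> subcube J (x(j := b)). clamp_coord g j b z \<noteq> z" ..
    with insert.IH[OF non_expansive_clamp_coord[OF insert.prems(1)] clamp_maps]
    obtain p where p: "1 \<le> p" "p \<le> card J"
      and many: "2 ^ p \<le> card {z. has_neg_cycle_within (clamp_coord g j b) J p z}"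
      by blast
    have "card {z. has_neg_cycle_within (clamp_coord g j b) J p z}
        \<le> card {z. has_neg_cycle_within g (insert j J) p z}"
      using has_neg_cycle_within_clamp_coord[OF insert.hyps(2)] by (intro card_mono) auto
    with p many insert.hyps show ?thesis
      by (intro exI[of _ p]) auto
  next
    case False
    then have "\<exists>z \<in> subcube J (x(j := b)). clamp_coord g j b z = z" for b
      by auto
    then obtain z0 z1 where z0: "z0 \<in> subcube J (x(j := False))" "clamp_coord g j False z0 = z0"
      and z1: "z1 \<in> subcube J (x(j := True))" "clamp_coord g j True z1 = z1"
      by meson
    have fixed: "negate_coord g j z = z" if "z \<in> subcube J (x(j := b))" "clamp_coord g j b z = z" for z b
    proof -
      have coords: "g z i = z i" if "i \<noteq> j" for i
        using \<open>clamp_coord g j b z = z\<close> that by (metis clamp_coord_def fun_upd_other)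
      have "g z j \<noteq> z j"
      proof
        assume "g z j = z j"
        have "g z = z"
        proof
          fix i
          show "g z i = z i"
            using coords \<open>g z j = z j\<close> by (cases "i = j") auto
        qed
        with insert.prems(3) halves that(1) show False by blast
      qed
      with coords show ?thesis
        by (auto simp: negate_coord_def fun_eq_iff)
    qed
    have "z0 \<in> subcube (insert j J) x" and "z1 \<in> subcube (insert j J) x"
      using halves z0(1) z1(1) by blast+
    moreover have "negate_coord g j z0 = z0" and "negate_coord g j z1 = z1"
      using fixed z0 z1 by blast+
    moreover have "z0 j \<noteq> z1 j"
      using z0(1) z1(1) insert.hyps(2) by (simp add: subcube_def)
    ultimately have "\<exists>p\<ge>1. p \<le> card (insert j J) \<and>
        2 ^ p \<le> card {z. has_neg_cycle_within (negate_coord (negate_coord g j) j) (insert j J) p z}"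
      by (rule fixed_points_across_coord_neg_cycles[OF non_expansive_negate_coord[OF insert.prems(1)]])
    then show ?thesis by simp
  qed
qed

lemma fixed_point_free_neg_cycles:
  fixes f :: "('v::finite \<Rightarrow> bool) \<Rightarrow> ('v \<Rightarrow> bool)"
  assumes ne: "non_expansive f" and "\<forall>x. f x \<noteq> x"
  shows "\<exists>p\<ge>1. p \<le> card (UNIV :: 'v set) \<and> 2 ^ p \<le> card {z. has_chordless_neg_cycle f z p}"
proof -
  have "subcube UNIV x = UNIV" for x :: "'v \<Rightarrow> bool"
    by (simp add: subcube_def)
  then obtain p where p: "1 \<le> p" "p \<le> card (UNIV :: 'v set)"
    and many: "2 ^ p \<le> card {z. has_neg_cycle_within f UNIV p z}"
    using fixed_point_free_subcube_neg_cycles[OF ne, of UNIV "\<lambda>_. False"] assms(2) by auto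
  have "{z. has_neg_cycle_within f UNIV p z} \<subseteq> {z. has_chordless_neg_cycle f z p}"
    using non_expansive_cycle_chordless[OF ne]
    by (auto simp: has_neg_cycle_within_def has_chordless_neg_cycle_def)
  then have "card {z. has_neg_cycle_within f UNIV p z} \<le> card {z. has_chordless_neg_cycle f z p}"
    by (rule card_mono[OF finite])
  with p many show ?thesis by (intro exI[of _ p]) auto
qed

lemma not_two_pow_le_if_le_pred: "c \<le> 2 ^ k - 1 \<Longrightarrow> \<not> 2 ^ k \<le> (c::nat)"
  using zero_less_power[of "2::nat" k] by linarith

theorem corollary8:
  fixes f :: "('v::finite \<Rightarrow> bool) \<Rightarrow> ('v \<Rightarrow> bool)"
  assumes "non_expansive f"
  shows "((\<forall>k. 1 \<le> k \<and> k \<le> card (UNIV :: 'v set) \<longrightarrow>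
             card {x. has_chordless_pos_cycle f x k} \<le> 2 ^ k - 1)
           \<longrightarrow> card {x. f x = x} \<le> 1)
       \<and> ((\<forall>k. 1 \<le> k \<and> k \<le> card (UNIV :: 'v set) \<longrightarrow>
             card {x. has_chordless_neg_cycle f x k} \<le> 2 ^ k - 1)
           \<longrightarrow> (\<exists>x. f x = x))"
proof (intro conjI impI)
  assume bound: "\<forall>k. 1 \<le> k \<and> k \<le> card (UNIV :: 'v set) \<longrightarrow>
      card {x. has_chordless_pos_cycle f x k} \<le> 2 ^ k - 1"
  show "card {x. f x = x} \<le> 1"
  proof (rule ccontr)
    assume "\<not> card {x. f x = x} \<le> 1"
    then obtain a c where "f a = a" "f c = c" "a \<noteq> c"
      by (auto simp: card_le_Suc0_iff_eq)
    with two_fixed_points_pos_cycles[OF assms] bound not_two_pow_le_if_le_pred show False by blast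
  qed
next
  assume bound: "\<forall>k. 1 \<le> k \<and> k \<le> card (UNIV :: 'v set) \<longrightarrow>
      card {x. has_chordless_neg_cycle f x k} \<le> 2 ^ k - 1"
  show "\<exists>x. f x = x"
  proof (rule ccontr)
    assume "\<nexists>x. f x = x"
    with fixed_point_free_neg_cycles[OF assms] bound not_two_pow_le_if_le_pred show False by blast
  qed
qed

end
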